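(* Let $C$ be the set of numbers $\sum_{n\ge1}c_n10^{-n}$ with all $c_n\in\{0,1\}$, and $D$ the set of numbers $\sum_{n\ge1}d_n10^{-n}$ with all $d_n\in\{0,2\}$. Then there is no set $E\subset C$ of positive Hausdorff dimension together with $a\in\mathbb{R}$ such that $E+a\subset D$. *)

theory Defs
  imports "HOL-Analysis.Analysis"
begin

definition hausdorff_pre :: "real \<Rightarrow> real \<Rightarrow> 'a::metric_space set \<Rightarrow> ennreal" where
  "hausdorff_pre s \<delta> E =
     (INF U \<in> {U :: nat \<Rightarrow> 'a set. E \<subseteq> (\<Union>i. U i) \<and> (\<forall>i. bounded (U i) \<and> diameter (U i) \<le> \<delta>)}.
        (\<Sum>i. ennreal (diameter (U i) powr s)))"

definition hausdorff_measure :: "real \<Rightarrow> 'a::metric_space set \<Rightarrow> ennreal" where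
  "hausdorff_measure s E = (SUP \<delta> \<in> {0<..}. hausdorff_pre s \<delta> E)"

text \<open>Hausdorff dimension: inf of the s > 0 with H^s(E) = 0 (infimum of empty set is infinity).\<close>
definition hausdorff_dim :: "'a::metric_space set \<Rightarrow> ereal" where
  "hausdorff_dim E = Inf {ereal s | s. s > 0 \<and> hausdorff_measure s E = 0}"

definition digitsC :: "real set" where
  "digitsC = {x. \<exists>c :: nat \<Rightarrow> nat. (\<forall>n. c n \<in> {0,1}) \<and> x = (\<Sum>n. real (c n) / 10 ^ Suc n)}"

definition digitsD :: "real set" where
  "digitsD = {x. \<exists>d :: nat \<Rightarrow> nat. (\<forall>n. d n \<in> {0,2}) \<and> x = (\<Sum>n. real (d n) / 10 ^ Suc n)}"

end

theory Submission
  imports Defs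
begin

(* Write  decimal_value e = \<Sum>n. e n / 10^(n+1)  for the value of a bounded
   real digit sequence e.  It is linear in e and bounded by B/9 when |e n| \<le> B, so an
   integer digit sequence with |e n| \<le> B < 9 whose value is 0 vanishes identically
   (peel off the leading digit: |e 0| = |decimal_value (tail e)| \<le> B/9 < 1).
   If x, y \<in> C and x + a, y + a \<in> D with digits c, c' and d, d', then the integer sequence
   (d - d') - (c - c') has value (x - y) - (x - y) = 0 and digits bounded by 3, hence it
   vanishes; as c - c' takes values in {-1,0,1} and d - d' in {-2,0,2}, both vanish and
   x = y.  So a set E \<subseteq> C with E + a \<subseteq> D has at most one point, and a set with at most
   one point has s-dimensional Hausdorff measure 0 for every s > 0 (it is covered by
   itself, of diameter 0), hence Hausdorff dimension 0. *)

definition decimal_value :: "(nat \<Rightarrow> real) \<Rightarrow> real" where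
  "decimal_value e = (\<Sum>n. e n / 10 ^ Suc n)"

lemma summable_decimal_abs:
  fixes e :: "nat \<Rightarrow> real"
  assumes "\<And>n. \<bar>e n\<bar> \<le> B"
  shows "summable (\<lambda>n. \<bar>e n / 10 ^ Suc n\<bar>)"
proof (rule summable_comparison_test')
  show "summable (\<lambda>n. B / 10 * (1/10) ^ n)"
    by (intro summable_mult summable_geometric) simp
  show "norm \<bar>e n / 10 ^ Suc n\<bar> \<le> B / 10 * (1/10) ^ n" for n
    using assms[of n] by (simp add: abs_divide power_divide divide_right_mono)
qed

lemma summable_decimal:
  fixes e :: "nat \<Rightarrow> real"
  assumes "\<And>n. \<bar>e n\<bar> \<le> B"
  shows "summable (\<lambda>n. e n / 10 ^ Suc n)"
  using summable_rabs_cancel[OF summable_decimal_abs[OF assms]] .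

lemma decimal_value_abs_le:
  fixes e :: "nat \<Rightarrow> real"
  assumes bound: "\<And>n. \<bar>e n\<bar> \<le> B"
  shows "\<bar>decimal_value e\<bar> \<le> B / 9"
proof -
  have geom: "(\<lambda>n. B / 10 * (1/10) ^ n) sums (B / 10 * (1 / (1 - 1/10)))"
    by (intro sums_mult geometric_sums) simp
  have "\<bar>decimal_value e\<bar> \<le> (\<Sum>n. \<bar>e n / 10 ^ Suc n\<bar>)"
    unfolding decimal_value_def by (rule summable_rabs[OF summable_decimal_abs[OF bound]])
  also have "\<dots> \<le> (\<Sum>n. B / 10 * (1/10) ^ n)"
    using bound by (intro suminf_le summable_decimal_abs[OF bound] sums_summable[OF geom])
      (simp add: abs_divide power_divide divide_right_mono)
  also have "\<dots> = B / 9"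
    using sums_unique[OF geom] by simp
  finally show ?thesis .
qed

lemma decimal_value_Suc:
  fixes e :: "nat \<Rightarrow> real"
  assumes "\<And>n. \<bar>e n\<bar> \<le> B"
  shows "decimal_value e = e 0 / 10 + decimal_value (\<lambda>n. e (Suc n)) / 10"
proof -
  have "decimal_value (\<lambda>n. e (Suc n)) / 10 = (\<Sum>n. e (Suc n) / 10 ^ Suc (Suc n))"
    unfolding decimal_value_def
    by (subst suminf_divide[symmetric]) (use summable_decimal[of "\<lambda>n. e (Suc n)" B] assms in simp_all)
  also have "\<dots> = decimal_value e - e 0 / 10"
    unfolding decimal_value_def using suminf_split_head[OF summable_decimal[OF assms]] by simp
  finally show ?thesis by (simp add: field_simps)
qed

lemma decimal_value_diff:
  fixes e f :: "nat \<Rightarrow> real"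
  assumes "\<And>n. \<bar>e n\<bar> \<le> B" and "\<And>n. \<bar>f n\<bar> \<le> B'"
  shows "decimal_value (\<lambda>n. e n - f n) = decimal_value e - decimal_value f"
  unfolding decimal_value_def diff_divide_distrib
  by (rule suminf_diff[symmetric, OF summable_decimal summable_decimal]) (fact assms)+

text \<open>If an integer digit sequence with digits of absolute value below 9 has value 0,
  its leading digit is 0 (it equals minus the value of the tail, which is at most 8/9),
  and hence its tail also has value 0.\<close>
lemma decimal_value_eq_0_leading_digit:
  fixes e :: "nat \<Rightarrow> real"
  assumes ints: "\<And>n. e n \<in> \<int>" and bound: "\<And>n. \<bar>e n\<bar> \<le> B" and "B < 9"
    and value_0: "decimal_value e = 0"
  shows "e 0 = 0" and "decimal_value (\<lambda>n. e (Suc n)) = 0"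
proof -
  have tail: "e 0 = - decimal_value (\<lambda>n. e (Suc n))"
    using decimal_value_Suc[of e B] bound value_0 by simp
  have "\<bar>decimal_value (\<lambda>n. e (Suc n))\<bar> \<le> B / 9"
    using bound by (intro decimal_value_abs_le) simp
  also have "\<dots> < 1" using \<open>B < 9\<close> by simp
  finally have "\<bar>e 0\<bar> < 1" using tail by simp
  thus "e 0 = 0" using ints[of 0] by (intro Ints_nonzero_abs_less1)
  thus "decimal_value (\<lambda>n. e (Suc n)) = 0" using tail by simp
qed

lemma decimal_value_eq_0_imp_digits_0:
  fixes e :: "nat \<Rightarrow> real"
  assumes "\<And>n. e n \<in> \<int>" and "\<And>n. \<bar>e n\<bar> \<le> B" and "B < 9" and "decimal_value e = 0"
  shows "e n = 0"
  using assms(1,2,4)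
proof (induction n arbitrary: e)
  case 0
  show ?case by (rule decimal_value_eq_0_leading_digit(1)[OF 0(1,2) \<open>B < 9\<close> 0(3)])
next
  case (Suc n)
  show ?case
    using Suc.IH[of "\<lambda>n. e (Suc n)"] Suc.prems
      decimal_value_eq_0_leading_digit(2)[OF Suc.prems(1,2) \<open>B < 9\<close> Suc.prems(3)]
    by simp
qed

lemma digitsC_iff: "x \<in> digitsC \<longleftrightarrow> (\<exists>c. (\<forall>n. c n \<in> {0,1}) \<and> x = decimal_value (\<lambda>n. real (c n)))"
  unfolding digitsC_def decimal_value_def by simp

lemma digitsD_iff: "x \<in> digitsD \<longleftrightarrow> (\<exists>d. (\<forall>n. d n \<in> {0,2}) \<and> x = decimal_value (\<lambda>n. real (d n)))"
  unfolding digitsD_def decimal_value_def by simp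

lemma digitsC_translate_digitsD_unique:
  assumes "x \<in> digitsC" "y \<in> digitsC" "x + a \<in> digitsD" "y + a \<in> digitsD"
  shows "x = y"
proof -
  obtain c c' where
    c: "\<forall>n. c n \<in> {0,1}" "x = decimal_value (\<lambda>n. real (c n))" and
    c': "\<forall>n. c' n \<in> {0,1}" "y = decimal_value (\<lambda>n. real (c' n))"
    using assms(1,2) unfolding digitsC_iff by blast
  obtain d d' where
    d: "\<forall>n. d n \<in> {0,2}" "x + a = decimal_value (\<lambda>n. real (d n))" and
    d': "\<forall>n. d' n \<in> {0,2}" "y + a = decimal_value (\<lambda>n. real (d' n))"
    using assms(3,4) unfolding digitsD_iff by blast
  define \<Delta>c where "\<Delta>c = (\<lambda>n. real (c n) - real (c' n))"
  define \<Delta>d where "\<Delta>d = (\<lambda>n. real (d n) - real (d' n))"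
  have digits: "c n = 0 \<or> c n = 1" "c' n = 0 \<or> c' n = 1" "d n = 0 \<or> d n = 2" "d' n = 0 \<or> d' n = 2"
    for n using c(1) c'(1) d(1) d'(1) by auto
  have \<Delta>c_vals: "\<Delta>c n \<in> {-1,0,1}" and \<Delta>d_vals: "\<Delta>d n \<in> {-2,0,2}" for n
    using digits[of n] unfolding \<Delta>c_def \<Delta>d_def by auto
  have bounds: "\<bar>real (c n)\<bar> \<le> 2" "\<bar>real (c' n)\<bar> \<le> 2" "\<bar>real (d n)\<bar> \<le> 2" "\<bar>real (d' n)\<bar> \<le> 2"
    for n using digits[of n] by auto
  have "decimal_value \<Delta>c = x - y"
    using decimal_value_diff[of "\<lambda>n. real (c n)" 2 "\<lambda>n. real (c' n)" 2] bounds c c'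
    unfolding \<Delta>c_def by simp
  moreover have "decimal_value \<Delta>d = x - y"
    using decimal_value_diff[of "\<lambda>n. real (d n)" 2 "\<lambda>n. real (d' n)" 2] bounds d d'
    unfolding \<Delta>d_def by simp
  moreover have "\<bar>\<Delta>c n\<bar> \<le> 1" "\<bar>\<Delta>d n\<bar> \<le> 2" for n
    using \<Delta>c_vals[of n] \<Delta>d_vals[of n] by auto
  ultimately have value_0: "decimal_value (\<lambda>n. \<Delta>d n - \<Delta>c n) = 0"
    using decimal_value_diff[of \<Delta>d 2 \<Delta>c 1] by simp
  have ints: "\<Delta>d n - \<Delta>c n \<in> \<int>" and bound: "\<bar>\<Delta>d n - \<Delta>c n\<bar> \<le> 3" for n
    using \<Delta>c_vals[of n] \<Delta>d_vals[of n] by auto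
  have "\<Delta>d n - \<Delta>c n = 0" for n
    by (rule decimal_value_eq_0_imp_digits_0[OF ints bound _ value_0]) simp
  hence "\<Delta>c n = 0" for n using \<Delta>c_vals[of n] \<Delta>d_vals[of n] by force
  hence "c = c'" unfolding \<Delta>c_def by auto
  thus "x = y" using c c' by simp
qed

lemma hausdorff_measure_subsingleton:
  fixes E :: "'a::metric_space set"
  assumes "\<And>x y. x \<in> E \<Longrightarrow> y \<in> E \<Longrightarrow> x = y" and "s > 0"
  shows "hausdorff_measure s E = 0"
proof -
  have "E = {} \<or> (\<exists>x. E = {x})" using assms(1) by blast
  hence bounded: "bounded E" and diam: "diameter E = 0" by auto
  have "hausdorff_pre s \<delta> E = 0" if "\<delta> > 0" for \<delta>
  proof -
    have "hausdorff_pre s \<delta> E \<le> (\<Sum>i::nat. ennreal (diameter E powr s))"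
      unfolding hausdorff_pre_def by (rule INF_lower) (use bounded diam that in auto)
    thus ?thesis using diam by simp
  qed
  thus ?thesis unfolding hausdorff_measure_def by simp
qed

lemma hausdorff_dim_subsingleton:
  fixes E :: "'a::metric_space set"
  assumes "\<And>x y. x \<in> E \<Longrightarrow> y \<in> E \<Longrightarrow> x = y"
  shows "hausdorff_dim E \<le> 0"
proof (rule ereal_le_epsilon2)
  fix \<epsilon> :: real assume "\<epsilon> > 0"
  thus "hausdorff_dim E \<le> 0 + ereal \<epsilon>"
    unfolding hausdorff_dim_def
    by (auto intro!: Inf_lower hausdorff_measure_subsingleton[OF assms])
qed

theorem mainTheorem5:
  shows "\<not> (\<exists>(E :: real set) (a :: real). E \<subseteq> digitsC \<and> hausdorff_dim E > 0 \<and> (\<lambda>x. x + a) ` E \<subseteq> digitsD)"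
proof
  assume "\<exists>(E :: real set) (a :: real). E \<subseteq> digitsC \<and> hausdorff_dim E > 0 \<and> (\<lambda>x. x + a) ` E \<subseteq> digitsD"
  then obtain E a where EC: "E \<subseteq> digitsC" and pos: "hausdorff_dim E > 0"
    and ED: "(\<lambda>x. x + a) ` E \<subseteq> digitsD" by blast
  have "x = y" if "x \<in> E" "y \<in> E" for x y
    using that EC ED by (intro digitsC_translate_digitsD_unique[of x y a]) auto
  hence "hausdorff_dim E \<le> 0" by (rule hausdorff_dim_subsingleton)
  with pos show False by simp
qed

end
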